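(* Let $W\in\mathcal B(\ell^2)$ be the unilateral weighted shift with bounded positive weight sequence $\{w_n\}_{n\ge0}$ (i.e. $We_n=w_ne_{n+1}$), and let $k$ be a positive integer. The following are equivalent: (i) $W^k$ is left-invertible and $\|(W^k)'(W^k)^*x\|\le\|(W^k)'W^kx\|$ for all $x\in\ell^2$, where $(W^k)'=W^k(W^{*k}W^k)^{-1}$; (ii) $\inf_{n\in\mathbb Z_+}w_n>0$ and $\prod_{j=0}^{k-1}\frac{w_{n+j}}{w_{k+n+j}}\ge1$ for every integer $n\ge k$.
   Context: $\{e_n\}_{n\ge0}$ is the standard orthonormal basis of $\ell^2$ (square-summable sequences indexed by $\mathbb Z_+$). *)

theory Defs
  imports "HOL-Analysis.Analysis"
begin

text \<open>Operators are functions on sequences;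
  all properties are relativised to the carrier l2.\<close>

definition l2 :: "(nat \<Rightarrow> complex) set" where
  "l2 = {x. summable (\<lambda>n. (cmod (x n))\<^sup>2)}"

definition l2norm :: "(nat \<Rightarrow> complex) \<Rightarrow> real" where
  "l2norm x = sqrt (\<Sum>n. (cmod (x n))\<^sup>2)"

definition l2inner :: "(nat \<Rightarrow> complex) \<Rightarrow> (nat \<Rightarrow> complex) \<Rightarrow> complex" where
  "l2inner x y = (\<Sum>n. x n * cnj (y n))"

definition bounded_op :: "((nat \<Rightarrow> complex) \<Rightarrow> (nat \<Rightarrow> complex)) \<Rightarrow> bool" where
  "bounded_op T \<longleftrightarrow>
     (\<forall>x\<in>l2. T x \<in> l2) \<and>
     (\<forall>x\<in>l2. \<forall>y\<in>l2. \<forall>a b. T (\<lambda>n. a * x n + b * y n) = (\<lambda>n. a * T x n + b * T y n)) \<and>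
     (\<exists>C. \<forall>x\<in>l2. l2norm (T x) \<le> C * l2norm x)"

definition adj :: "((nat \<Rightarrow> complex) \<Rightarrow> (nat \<Rightarrow> complex)) \<Rightarrow> ((nat \<Rightarrow> complex) \<Rightarrow> (nat \<Rightarrow> complex))" where
  "adj T = (\<lambda>y. if y \<in> l2 then (THE z. z \<in> l2 \<and> (\<forall>x\<in>l2. l2inner (T x) y = l2inner x z)) else (\<lambda>_. 0))"

definition inv_op :: "((nat \<Rightarrow> complex) \<Rightarrow> (nat \<Rightarrow> complex)) \<Rightarrow> ((nat \<Rightarrow> complex) \<Rightarrow> (nat \<Rightarrow> complex))" where
  "inv_op A = (\<lambda>y. if y \<in> l2 then (THE z. z \<in> l2 \<and> A z = y) else (\<lambda>_. 0))"

definition left_invertible :: "((nat \<Rightarrow> complex) \<Rightarrow> (nat \<Rightarrow> complex)) \<Rightarrow> bool" where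
  "left_invertible T \<longleftrightarrow> (\<exists>S. bounded_op S \<and> (\<forall>x\<in>l2. S (T x) = x))"

text \<open>Unilateral weighted shift: W e_n = w_n e_(n+1).\<close>
definition wshift :: "(nat \<Rightarrow> real) \<Rightarrow> (nat \<Rightarrow> complex) \<Rightarrow> (nat \<Rightarrow> complex)" where
  "wshift w x = (\<lambda>n. if n = 0 then 0 else complex_of_real (w (n - 1)) * x (n - 1))"

end

theory Submission
  imports Defs
begin

text \<open>
  With \<open>a\<^sub>n = w\<^sub>n \<cdots> w\<^sub>n\<^sub>+\<^sub>k\<^sub>-\<^sub>1\<close> we have
  \<open>W\<^sup>k e\<^sub>n = a\<^sub>n e\<^sub>n\<^sub>+\<^sub>k\<close>, so \<open>W\<^sup>*\<^sup>k W\<^sup>k\<close> is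
  multiplication by \<open>a\<^sub>n\<^sup>2\<close> and \<open>(W\<^sup>k)' e\<^sub>n = a\<^sub>n\<^sup>-\<^sup>1 e\<^sub>n\<^sub>+\<^sub>k\<close>.
  Hence \<open>(W\<^sup>k)'(W\<^sup>k)\<^sup>*\<close> is the orthogonal projection onto the closed span of
  the \<open>e\<^sub>n\<close> with \<open>n \<ge> k\<close>, while \<open>(W\<^sup>k)' W\<^sup>k\<close> is, up to an isometric
  shift, multiplication by \<open>a\<^sub>n / a\<^sub>n\<^sub>+\<^sub>k\<close>. Testing on unit vectors, the norm
  inequality holds iff \<open>a\<^sub>n / a\<^sub>n\<^sub>+\<^sub>k \<ge> 1\<close> for \<open>n \<ge> k\<close>, which is the
  product condition. For bounded weights, \<open>W\<^sup>k\<close> is left invertible iff the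
  \<open>a\<^sub>n\<close> are bounded below, that is, iff \<open>inf w\<^sub>n > 0\<close>.
\<close>

lemma l2_norm_mono:
  assumes "y \<in> l2" and "\<And>n. cmod (x n) \<le> cmod (y n)"
  shows "x \<in> l2" and "l2norm x \<le> l2norm y"
proof -
  have sq: "(cmod (x n))\<^sup>2 \<le> (cmod (y n))\<^sup>2" for n
    using assms(2) by (simp add: power_mono)
  have y: "summable (\<lambda>n. (cmod (y n))\<^sup>2)"
    using assms(1) by (simp add: l2_def)
  have x: "summable (\<lambda>n. (cmod (x n))\<^sup>2)"
    using sq by (intro summable_comparison_test'[OF y]) auto
  then show "x \<in> l2"
    by (simp add: l2_def)
  show "l2norm x \<le> l2norm y"
    unfolding l2norm_def using sq x y by (intro real_sqrt_le_mono suminf_le) auto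
qed

lemma l2_scale:
  assumes "x \<in> l2"
  shows "(\<lambda>n. c * x n) \<in> l2" and "l2norm (\<lambda>n. c * x n) = cmod c * l2norm x"
proof -
  have "summable (\<lambda>n. (cmod (x n))\<^sup>2)"
    using assms by (simp add: l2_def)
  then have "(\<lambda>n. (cmod c)\<^sup>2 * (cmod (x n))\<^sup>2) sums ((cmod c)\<^sup>2 * (\<Sum>n. (cmod (x n))\<^sup>2))"
    by (intro sums_mult summable_sums)
  then show "(\<lambda>n. c * x n) \<in> l2" and "l2norm (\<lambda>n. c * x n) = cmod c * l2norm x"
    unfolding l2_def l2norm_def
    by (auto simp: norm_mult power_mult_distrib real_sqrt_mult sums_iff)
qed

lemma l2_multiplier:
  assumes "x \<in> l2" and "\<And>n. cmod (m n) \<le> B"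
  shows "(\<lambda>n. m n * x n) \<in> l2" and "l2norm (\<lambda>n. m n * x n) \<le> B * l2norm x"
proof -
  have "B \<ge> 0"
    using assms(2)[of 0] norm_ge_zero order_trans by blast
  then have bound: "cmod (m n * x n) \<le> cmod (of_real B * x n)" for n
    using assms(2) by (simp add: norm_mult mult_right_mono)
  show "(\<lambda>n. m n * x n) \<in> l2"
    by (rule l2_norm_mono(1)[OF l2_scale(1)[OF assms(1)] bound])
  show "l2norm (\<lambda>n. m n * x n) \<le> B * l2norm x"
    using l2_norm_mono(2)[OF l2_scale(1)[OF assms(1)] bound] l2_scale(2)[OF assms(1)] \<open>B \<ge> 0\<close>
    by simp
qed

lemma l2_shift_left:
  assumes "x \<in> l2"
  shows "(\<lambda>n. x (n + k)) \<in> l2" and "l2norm (\<lambda>n. x (n + k)) \<le> l2norm x"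
proof -
  have x: "summable (\<lambda>n. (cmod (x n))\<^sup>2)"
    using assms by (simp add: l2_def)
  then show "(\<lambda>n. x (n + k)) \<in> l2"
    unfolding l2_def by (simp add: summable_iff_shift[of "\<lambda>n. (cmod (x n))\<^sup>2" k])
  have "(\<Sum>n. (cmod (x n))\<^sup>2) = (\<Sum>n. (cmod (x (n + k)))\<^sup>2) + (\<Sum>i<k. (cmod (x i))\<^sup>2)"
    using x by (rule suminf_split_initial_segment)
  moreover have "(\<Sum>i<k. (cmod (x i))\<^sup>2) \<ge> 0"
    by (intro sum_nonneg) auto
  ultimately show "l2norm (\<lambda>n. x (n + k)) \<le> l2norm x"
    by (simp add: l2norm_def)
qed

lemma l2_shift_right:
  assumes "x \<in> l2"
  shows "(\<lambda>n. if n < k then 0 else x (n - k)) \<in> l2"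
    and "l2norm (\<lambda>n. if n < k then 0 else x (n - k)) = l2norm x"
proof -
  let ?f = "\<lambda>n. (cmod (if n < k then 0 else x (n - k)))\<^sup>2"
  have "summable (\<lambda>n. ?f (n + k))"
    using assms by (simp add: l2_def)
  then have f: "summable ?f"
    by (rule summable_iff_shift[THEN iffD1])
  then show "(\<lambda>n. if n < k then 0 else x (n - k)) \<in> l2"
    by (simp add: l2_def)
  have "suminf ?f = (\<Sum>n. ?f (n + k)) + (\<Sum>i<k. ?f i)"
    using f by (rule suminf_split_initial_segment)
  then show "l2norm (\<lambda>n. if n < k then 0 else x (n - k)) = l2norm x"
    by (simp add: l2norm_def)
qed

lemma l2_inner_summable:
  assumes "x \<in> l2" and "y \<in> l2"
  shows "summable (\<lambda>n. x n * cnj (y n))"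
proof (rule summable_norm_cancel, rule summable_comparison_test')
  show "summable (\<lambda>n. ((cmod (x n))\<^sup>2 + (cmod (y n))\<^sup>2) / 2)"
    using assms by (intro summable_divide summable_add) (auto simp: l2_def)
  show "norm (norm (x n * cnj (y n))) \<le> ((cmod (x n))\<^sup>2 + (cmod (y n))\<^sup>2) / 2" for n
    using sum_squares_bound[of "cmod (x n)" "cmod (y n)"] by (simp add: norm_mult power2_eq_square)
qed

definition unit_vec :: "nat \<Rightarrow> nat \<Rightarrow> complex" where
  "unit_vec j = (\<lambda>n. if n = j then 1 else 0)"

lemma l2norm_single: "l2norm (\<lambda>n. if n = j then c else 0) = cmod c"
proof -
  have "(\<lambda>n. (cmod (if n = j then c else 0))\<^sup>2) = (\<lambda>n. if n = j then (cmod c)\<^sup>2 else 0)"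
    by auto
  then show ?thesis
    unfolding l2norm_def using sums_single[of j "\<lambda>_. (cmod c)\<^sup>2"] by (simp add: sums_iff)
qed

lemma unit_vec_l2: "unit_vec j \<in> l2"
proof -
  have "(\<lambda>n. (cmod (unit_vec j n))\<^sup>2) = (\<lambda>n. if n = j then 1 else 0)"
    by (auto simp: unit_vec_def)
  then show ?thesis
    unfolding l2_def using summable_single[of j "\<lambda>_. 1::real"] by simp
qed

lemma l2norm_unit_vec: "l2norm (unit_vec j) = 1"
  using l2norm_single[of j 1] by (simp add: unit_vec_def)

lemma l2inner_unit_vec: "l2inner (unit_vec j) z = cnj (z j)"
proof -
  have "(\<lambda>n. unit_vec j n * cnj (z n)) = (\<lambda>n. if n = j then cnj (z j) else 0)"
    by (auto simp: unit_vec_def)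
  then show ?thesis
    unfolding l2inner_def using sums_single[of j "\<lambda>_. cnj (z j)"] by (simp add: sums_iff)
qed

lemma adj_eqI:
  assumes "y \<in> l2" and "z \<in> l2" and "\<And>x. x \<in> l2 \<Longrightarrow> l2inner (T x) y = l2inner x z"
  shows "adj T y = z"
proof -
  have "(THE z. z \<in> l2 \<and> (\<forall>x\<in>l2. l2inner (T x) y = l2inner x z)) = z"
  proof (rule the_equality)
    fix z' assume z': "z' \<in> l2 \<and> (\<forall>x\<in>l2. l2inner (T x) y = l2inner x z')"
    show "z' = z"
    proof
      fix n
      have "cnj (z' n) = cnj (z n)"
        using z' assms(3)[OF unit_vec_l2] unit_vec_l2 by (simp add: l2inner_unit_vec)
      then show "z' n = z n"
        by simp
    qed
  qed (use assms(2,3) in auto)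
  then show ?thesis
    using assms(1) by (simp add: adj_def)
qed

lemma inv_op_eqI:
  assumes "y \<in> l2" and "z \<in> l2" and "A z = y"
    and "\<And>z'. z' \<in> l2 \<Longrightarrow> A z' = y \<Longrightarrow> z' = z"
  shows "inv_op A y = z"
proof -
  have "(THE z. z \<in> l2 \<and> A z = y) = z"
    using assms(2-4) by (intro the_equality) blast+
  then show ?thesis
    using assms(1) by (simp add: inv_op_def)
qed

lemma l2norm_tail_le_multiplier_iff:
  assumes r: "\<And>n. cmod (r n) \<le> B"
  shows "(\<forall>x\<in>l2. l2norm (\<lambda>n. if n < k then 0 else x n) \<le> l2norm (\<lambda>n. r n * x n))
    \<longleftrightarrow> (\<forall>n\<ge>k. 1 \<le> cmod (r n))"
proof
  assume le: "\<forall>x\<in>l2. l2norm (\<lambda>n. if n < k then 0 else x n) \<le> l2norm (\<lambda>n. r n * x n)"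
  show "\<forall>n\<ge>k. 1 \<le> cmod (r n)"
  proof (intro allI impI)
    fix n assume "k \<le> n"
    then have "(\<lambda>i. if i < k then 0 else unit_vec n i) = unit_vec n"
      by (auto simp: unit_vec_def)
    moreover have "(\<lambda>i. r i * unit_vec n i) = (\<lambda>i. if i = n then r n else 0)"
      by (auto simp: unit_vec_def)
    moreover have "l2norm (\<lambda>i. if i < k then 0 else unit_vec n i) \<le> l2norm (\<lambda>i. r i * unit_vec n i)"
      using le unit_vec_l2 by blast
    ultimately show "1 \<le> cmod (r n)"
      by (simp add: l2norm_unit_vec l2norm_single)
  qed
next
  assume ge: "\<forall>n\<ge>k. 1 \<le> cmod (r n)"
  show "\<forall>x\<in>l2. l2norm (\<lambda>n. if n < k then 0 else x n) \<le> l2norm (\<lambda>n. r n * x n)"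
  proof
    fix x assume x: "x \<in> l2"
    have "cmod (if n < k then 0 else x n) \<le> cmod (r n * x n)" for n
      using ge mult_right_mono[of 1 "cmod (r n)" "cmod (x n)"] by (simp add: norm_mult)
    then show "l2norm (\<lambda>n. if n < k then 0 else x n) \<le> l2norm (\<lambda>n. r n * x n)"
      by (rule l2_norm_mono(2)[OF l2_multiplier(1)[OF x r]])
  qed
qed

definition weight_prod :: "(nat \<Rightarrow> real) \<Rightarrow> nat \<Rightarrow> nat \<Rightarrow> real" where
  "weight_prod w m i = (\<Prod>j<m. w (i + j))"

lemma weight_prod_0 [simp]: "weight_prod w 0 i = 1"
  by (simp add: weight_prod_def)

lemma weight_prod_Suc: "weight_prod w (Suc m) i = weight_prod w m i * w (i + m)"
  by (simp add: weight_prod_def)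

lemma weight_prod_Suc': "weight_prod w (Suc m) i = w i * weight_prod w m (Suc i)"
  unfolding weight_prod_def prod.lessThan_Suc_shift by simp

lemma weight_ratio_eq_prod:
  "weight_prod w k n / weight_prod w k (n + k) = (\<Prod>j<k. w (n + j) / w (k + n + j))"
  unfolding weight_prod_def prod_dividef by (simp add: add_ac)

lemma weight_prod_pos: "(\<And>n. w n > 0) \<Longrightarrow> weight_prod w m i > 0"
  unfolding weight_prod_def by (intro prod_pos) auto

lemma INF_power_le_weight_prod:
  assumes wpos: "\<And>n. w n > 0"
  shows "(INF n. w n) ^ m \<le> weight_prod w m i"
proof -
  have "bdd_below (range w)"
    using wpos by (intro bdd_belowI[of _ 0]) (auto intro: less_imp_le)
  then have "(INF n. w n) \<le> w n" for n
    by (rule cINF_lower) simp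
  moreover have "0 \<le> (INF n. w n)"
    using wpos by (intro cINF_greatest) (auto intro: less_imp_le)
  ultimately have "(\<Prod>j<m. (INF n. w n)) \<le> weight_prod w m i"
    unfolding weight_prod_def by (intro prod_mono) auto
  then show ?thesis
    by simp
qed

lemma wshift_power_apply:
  "(wshift w ^^ m) x = (\<lambda>n. if n < m then 0 else of_real (weight_prod w m (n - m)) * x (n - m))"
proof (induction m)
  case (Suc m)
  show ?case
  proof
    fix n
    show "(wshift w ^^ Suc m) x n
      = (if n < Suc m then 0 else of_real (weight_prod w (Suc m) (n - Suc m)) * x (n - Suc m))"
    proof (cases "n < Suc m")
      case False
      then have "n - 1 = n - Suc m + m" and "n - 1 - m = n - Suc m"
        by auto
      with False show ?thesis
        by (simp add: Suc.IH wshift_def weight_prod_Suc mult_ac)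
    qed (auto simp: Suc.IH wshift_def)
  qed
qed simp

lemma wshift_power_unit_vec:
  "(wshift w ^^ m) (unit_vec j) = (\<lambda>n. if n = j + m then of_real (weight_prod w m j) else 0)"
  by (auto simp: wshift_power_apply unit_vec_def fun_eq_iff)

context
  fixes w :: "nat \<Rightarrow> real" and M :: real
  assumes weights_bounded: "\<And>n. \<bar>w n\<bar> \<le> M"
begin

lemma cmod_weight_prod_le: "cmod (of_real (weight_prod w m i)) \<le> M ^ m"
proof -
  have "\<bar>weight_prod w m i\<bar> = (\<Prod>j<m. \<bar>w (i + j)\<bar>)"
    by (simp add: weight_prod_def abs_prod)
  also have "\<dots> \<le> (\<Prod>j<m. M)"
    using weights_bounded by (intro prod_mono) auto
  finally show ?thesis
    by simp
qed

lemma wshift_power_l2: "x \<in> l2 \<Longrightarrow> (wshift w ^^ m) x \<in> l2"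
  unfolding wshift_power_apply
  by (intro l2_shift_right(1) l2_multiplier(1)[where B = "M ^ m"] cmod_weight_prod_le)

lemma weighted_shift_left_l2:
  "y \<in> l2 \<Longrightarrow> (\<lambda>n. of_real (weight_prod w m n) * y (n + m)) \<in> l2"
  by (intro l2_multiplier(1)[where B = "M ^ m"] l2_shift_left(1) cmod_weight_prod_le)

lemma adj_wshift_power:
  assumes y: "y \<in> l2"
  shows "adj (wshift w ^^ m) y = (\<lambda>n. of_real (weight_prod w m n) * y (n + m))"
proof (rule adj_eqI[OF y weighted_shift_left_l2[OF y]])
  fix x assume x: "x \<in> l2"
  let ?g = "\<lambda>n. (wshift w ^^ m) x n * cnj (y n)"
  have "summable ?g"
    by (rule l2_inner_summable[OF wshift_power_l2[OF x] y])
  then have "suminf ?g = (\<Sum>n. ?g (n + m)) + (\<Sum>i<m. ?g i)"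
    by (rule suminf_split_initial_segment)
  moreover have "(\<Sum>i<m. ?g i) = 0"
    by (simp add: wshift_power_apply)
  moreover have "(\<lambda>n. ?g (n + m)) = (\<lambda>n. x n * cnj (of_real (weight_prod w m n) * y (n + m)))"
    by (simp add: wshift_power_apply mult_ac)
  ultimately show "l2inner ((wshift w ^^ m) x) y
      = l2inner x (\<lambda>n. of_real (weight_prod w m n) * y (n + m))"
    unfolding l2inner_def by simp
qed

lemma iterate_adj_wshift:
  "y \<in> l2 \<Longrightarrow> (adj (wshift w) ^^ m) y = (\<lambda>n. of_real (weight_prod w m n) * y (n + m))"
proof (induction m)
  case (Suc m)
  have "(adj (wshift w) ^^ Suc m) y
      = adj (wshift w ^^ 1) (\<lambda>n. of_real (weight_prod w m n) * y (n + m))"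
    using Suc by simp
  also have "\<dots> = (\<lambda>n. of_real (weight_prod w (Suc m) n) * y (n + Suc m))"
    unfolding adj_wshift_power[OF weighted_shift_left_l2[OF Suc.prems]]
    by (simp add: weight_prod_Suc' mult_ac)
  finally show ?case .
qed simp

lemma gram_wshift_power_apply:
  assumes "z \<in> l2"
  shows "((adj (wshift w) ^^ m) \<circ> (wshift w ^^ m)) z = (\<lambda>n. of_real ((weight_prod w m n)\<^sup>2) * z n)"
  unfolding o_apply iterate_adj_wshift[OF wshift_power_l2[OF assms]]
  by (simp add: wshift_power_apply power2_eq_square mult_ac)

end

lemma l2norm_nonneg: "x \<in> l2 \<Longrightarrow> 0 \<le> l2norm x"
  unfolding l2norm_def l2_def by (simp add: suminf_nonneg)

lemma left_invertible_bounded_below: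
  assumes "left_invertible T" and "\<And>x. x \<in> l2 \<Longrightarrow> T x \<in> l2"
  shows "\<exists>C>0. \<forall>x\<in>l2. l2norm x \<le> C * l2norm (T x)"
proof -
  obtain S where "bounded_op S" and S: "\<And>x. x \<in> l2 \<Longrightarrow> S (T x) = x"
    using assms(1) unfolding left_invertible_def by blast
  then obtain C where C: "\<And>y. y \<in> l2 \<Longrightarrow> l2norm (S y) \<le> C * l2norm y"
    unfolding bounded_op_def by blast
  have "l2norm x \<le> max C 1 * l2norm (T x)" if x: "x \<in> l2" for x
  proof -
    have "l2norm x \<le> C * l2norm (T x)"
      using C[OF assms(2)[OF x]] S[OF x] by simp
    also have "\<dots> \<le> max C 1 * l2norm (T x)"
      using l2norm_nonneg[OF assms(2)[OF x]] by (intro mult_right_mono) auto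
    finally show ?thesis .
  qed
  then show ?thesis
    by (intro exI[of _ "max C 1"]) auto
qed

lemma bounded_op_multiplier_shift_left:
  assumes m: "\<And>n. cmod (m n) \<le> B"
  shows "bounded_op (\<lambda>y n. m n * y (n + k))"
  unfolding bounded_op_def
proof (intro conjI ballI allI exI[of _ B])
  fix y :: "nat \<Rightarrow> complex" assume y: "y \<in> l2"
  show "(\<lambda>n. m n * y (n + k)) \<in> l2"
    by (rule l2_multiplier(1)[OF l2_shift_left(1)[OF y] m])
  have "0 \<le> B"
    using m[of 0] norm_ge_zero order_trans by blast
  then show "l2norm (\<lambda>n. m n * y (n + k)) \<le> B * l2norm y"
    using l2_multiplier(2)[OF l2_shift_left(1)[OF y] m] l2_shift_left(2)[OF y, of k]
    by (meson mult_left_mono order_trans)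
qed (simp add: algebra_simps)

lemma left_invertible_wshift_power:
  assumes wpos: "\<And>n. w n > 0" and winf: "(INF n. w n) > 0"
  shows "left_invertible (wshift w ^^ k)"
proof -
  let ?a = "weight_prod w k"
  have "cmod (of_real (1 / ?a n)) \<le> 1 / (INF n. w n) ^ k" for n
  proof -
    have "1 / ?a n \<le> 1 / (INF n. w n) ^ k"
      using INF_power_le_weight_prod[of w, OF wpos] winf by (intro frac_le) auto
    then show ?thesis
      using weight_prod_pos[of w, OF wpos] by (simp only: norm_of_real) (simp add: abs_of_pos)
  qed
  then have "bounded_op (\<lambda>y n. of_real (1 / ?a n) * y (n + k))"
    by (rule bounded_op_multiplier_shift_left)
  moreover have "(\<lambda>n. of_real (1 / ?a n) * (wshift w ^^ k) x (n + k)) = x" for x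
    using weight_prod_pos[of w, OF wpos] by (simp add: wshift_power_apply fun_eq_iff less_imp_neq[symmetric])
  ultimately show ?thesis
    unfolding left_invertible_def by blast
qed

lemma left_invertible_wshift_power_imp_INF_pos:
  assumes wpos: "\<And>n. w n > 0" and wM: "\<And>n. w n \<le> M" and "k > 0"
    and li: "left_invertible (wshift w ^^ k)"
  shows "(INF n. w n) > 0"
proof -
  have wabs: "\<bar>w n\<bar> \<le> M" for n
    using wpos[of n] wM[of n] by simp
  obtain C where "C > 0" and C: "\<And>x. x \<in> l2 \<Longrightarrow> l2norm x \<le> C * l2norm ((wshift w ^^ k) x)"
    using left_invertible_bounded_below[OF li wshift_power_l2[of w M, OF wabs]] by blast
  have "M > 0"
    using wpos[of 0] wM[of 0] by simp
  obtain k' where k': "k = Suc k'"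
    using \<open>k > 0\<close> gr0_implies_Suc by blast
  have "1 / (C * M ^ k') \<le> w j" for j
  proof -
    have "1 \<le> C * weight_prod w k j"
      using C[OF unit_vec_l2[of j]] weight_prod_pos[of w, OF wpos, of k j]
      by (simp add: wshift_power_unit_vec l2norm_unit_vec l2norm_single)
    also have "\<dots> \<le> C * (w j * M ^ k')"
      using cmod_weight_prod_le[of w M, OF wabs, of k' "Suc j"]
        weight_prod_pos[of w, OF wpos, of k' "Suc j"] wpos[of j] \<open>C > 0\<close>
      by (simp add: k' weight_prod_Suc')
    finally show ?thesis
      using \<open>C > 0\<close> \<open>M > 0\<close> by (simp add: field_simps)
  qed
  then have "1 / (C * M ^ k') \<le> (INF n. w n)"
    by (intro cINF_greatest) auto
  moreover have "1 / (C * M ^ k') > 0"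
    using \<open>C > 0\<close> \<open>M > 0\<close> by simp
  ultimately show ?thesis
    by linarith
qed

lemma left_invertible_wshift_power_iff:
  assumes "\<And>n. w n > 0" and "\<And>n. w n \<le> M" and "k > 0"
  shows "left_invertible (wshift w ^^ k) \<longleftrightarrow> (INF n. w n) > 0"
  using assms left_invertible_wshift_power left_invertible_wshift_power_imp_INF_pos by blast

definition wshift_dual :: "(nat \<Rightarrow> real) \<Rightarrow> nat \<Rightarrow> (nat \<Rightarrow> complex) \<Rightarrow> nat \<Rightarrow> complex" where
  "wshift_dual w k = (wshift w ^^ k) \<circ> inv_op ((adj (wshift w) ^^ k) \<circ> (wshift w ^^ k))"

context
  fixes w :: "nat \<Rightarrow> real" and M :: real and k :: nat
  assumes wpos: "\<And>n. w n > 0" and wM: "\<And>n. w n \<le> M" and winf: "(INF n. w n) > 0"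
begin

lemma weights_abs_le: "\<bar>w n\<bar> \<le> M"
  using wpos[of n] wM[of n] by simp

lemma weight_prod_ne_zero: "weight_prod w m n \<noteq> 0"
  using weight_prod_pos[of w, OF wpos] by (simp add: less_imp_neq[symmetric])

lemma inv_gram_wshift_power:
  assumes y: "y \<in> l2"
  shows "inv_op ((adj (wshift w) ^^ k) \<circ> (wshift w ^^ k)) y
    = (\<lambda>n. of_real (1 / (weight_prod w k n)\<^sup>2) * y n)"
proof (rule inv_op_eqI[OF y])
  note gram = gram_wshift_power_apply[of w M, OF weights_abs_le]
  have "cmod (of_real (1 / (weight_prod w k n)\<^sup>2)) \<le> 1 / ((INF n. w n) ^ k)\<^sup>2" for n
  proof -
    have "((INF n. w n) ^ k)\<^sup>2 \<le> (weight_prod w k n)\<^sup>2"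
      using INF_power_le_weight_prod[of w, OF wpos] winf by (intro power_mono) auto
    then have "1 / (weight_prod w k n)\<^sup>2 \<le> 1 / ((INF n. w n) ^ k)\<^sup>2"
      using winf by (intro frac_le) auto
    then show ?thesis
      by (simp only: norm_of_real) simp
  qed
  then show z: "(\<lambda>n. of_real (1 / (weight_prod w k n)\<^sup>2) * y n) \<in> l2"
    by (rule l2_multiplier(1)[OF y])
  show "((adj (wshift w) ^^ k) \<circ> (wshift w ^^ k))
      (\<lambda>n. of_real (1 / (weight_prod w k n)\<^sup>2) * y n) = y"
    unfolding gram[OF z] by (simp add: weight_prod_ne_zero field_simps)
  fix z' assume "z' \<in> l2" and "((adj (wshift w) ^^ k) \<circ> (wshift w ^^ k)) z' = y"
  then have "y = (\<lambda>n. of_real ((weight_prod w k n)\<^sup>2) * z' n)"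
    using gram by simp
  then show "z' = (\<lambda>n. of_real (1 / (weight_prod w k n)\<^sup>2) * y n)"
    by (simp add: weight_prod_ne_zero field_simps)
qed

lemma wshift_dual_apply:
  assumes "v \<in> l2"
  shows "wshift_dual w k v = (\<lambda>n. if n < k then 0 else v (n - k) / of_real (weight_prod w k (n - k)))"
proof
  fix n
  have "of_real a * (of_real (1 / a\<^sup>2) * z) = z / of_real a" if "a \<noteq> 0" for a :: real and z :: complex
    using that by (simp add: field_simps power2_eq_square)
  then show "wshift_dual w k v n = (if n < k then 0 else v (n - k) / of_real (weight_prod w k (n - k)))"
    unfolding wshift_dual_def o_apply inv_gram_wshift_power[OF assms] wshift_power_apply
    by (simp add: weight_prod_ne_zero)
qed

lemma wshift_dual_adj_wshift_power:
  assumes "x \<in> l2"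
  shows "wshift_dual w k (adj (wshift w ^^ k) x) = (\<lambda>n. if n < k then 0 else x n)"
  using assms
  by (auto simp: adj_wshift_power[of w M, OF weights_abs_le]
      weighted_shift_left_l2[of w M, OF weights_abs_le] wshift_dual_apply weight_prod_ne_zero fun_eq_iff)

lemma cmod_weight_ratio_le:
  "cmod (of_real (weight_prod w k n / weight_prod w k (n + k))) \<le> M ^ k / (INF n. w n) ^ k"
proof -
  have "weight_prod w k n \<le> M ^ k"
    using cmod_weight_prod_le[of w M, OF weights_abs_le, of k n] by simp
  moreover have "(INF n. w n) ^ k \<le> weight_prod w k (n + k)"
    by (rule INF_power_le_weight_prod[of w, OF wpos])
  ultimately show ?thesis
    using weight_prod_pos[of w, OF wpos] winf order_trans[OF abs_ge_zero weights_abs_le[of 0]]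
    by (simp only: norm_of_real) (simp add: abs_of_pos frac_le)
qed

lemma l2norm_wshift_dual_wshift_power:
  assumes x: "x \<in> l2"
  shows "l2norm (wshift_dual w k ((wshift w ^^ k) x))
    = l2norm (\<lambda>n. of_real (weight_prod w k n / weight_prod w k (n + k)) * x n)"
proof -
  have "wshift_dual w k ((wshift w ^^ k) x) = (\<lambda>n. if n < k + k then 0
      else of_real (weight_prod w k (n - (k + k)) / weight_prod w k (n - (k + k) + k)) * x (n - (k + k)))"
    unfolding wshift_dual_apply[OF wshift_power_l2[of w M, OF weights_abs_le x]]
    by (auto simp: wshift_power_apply weight_prod_ne_zero fun_eq_iff)
  then show ?thesis
    using l2_shift_right(2)[OF l2_multiplier(1)[OF x cmod_weight_ratio_le], of "k + k"] by simp
qed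

lemma wshift_dual_norm_le_iff:
  "(\<forall>x\<in>l2. l2norm (wshift_dual w k (adj (wshift w ^^ k) x))
      \<le> l2norm (wshift_dual w k ((wshift w ^^ k) x)))
    \<longleftrightarrow> (\<forall>n\<ge>k. 1 \<le> (\<Prod>j<k. w (n + j) / w (k + n + j)))"
proof -
  have "(\<forall>x\<in>l2. l2norm (wshift_dual w k (adj (wshift w ^^ k) x))
      \<le> l2norm (wshift_dual w k ((wshift w ^^ k) x)))
    \<longleftrightarrow> (\<forall>x\<in>l2. l2norm (\<lambda>n. if n < k then 0 else x n)
      \<le> l2norm (\<lambda>n. of_real (weight_prod w k n / weight_prod w k (n + k)) * x n))"
    by (simp add: wshift_dual_adj_wshift_power l2norm_wshift_dual_wshift_power)
  also have "\<dots> \<longleftrightarrow> (\<forall>n\<ge>k. 1 \<le> cmod (of_real (weight_prod w k n / weight_prod w k (n + k))))"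
    by (rule l2norm_tail_le_multiplier_iff[OF cmod_weight_ratio_le])
  also have "\<dots> \<longleftrightarrow> (\<forall>n\<ge>k. 1 \<le> (\<Prod>j<k. w (n + j) / w (k + n + j)))"
  proof -
    have "cmod (of_real (weight_prod w k n / weight_prod w k (n + k)))
        = weight_prod w k n / weight_prod w k (n + k)" for n
      using weight_prod_pos[of w, OF wpos] by (simp only: norm_of_real) (simp add: abs_of_pos)
    then show ?thesis
      by (simp only: weight_ratio_eq_prod)
  qed
  finally show ?thesis .
qed

end

theorem proposition3p1:
  fixes w :: "nat \<Rightarrow> real" and k :: nat
  assumes wpos: "\<forall>n. w n > 0"
    and wbdd: "\<exists>M. \<forall>n. w n \<le> M"
    and kpos: "k > 0"
  shows "(left_invertible (wshift w ^^ k) \<and>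
          (\<forall>x\<in>l2.
             l2norm (((wshift w ^^ k) \<circ> inv_op ((adj (wshift w) ^^ k) \<circ> (wshift w ^^ k)))
                        (adj (wshift w ^^ k) x))
           \<le> l2norm (((wshift w ^^ k) \<circ> inv_op ((adj (wshift w) ^^ k) \<circ> (wshift w ^^ k)))
                        ((wshift w ^^ k) x))))
     \<longleftrightarrow>
         ((INF n. w n) > 0 \<and>
          (\<forall>n\<ge>k. (\<Prod>j<k. w (n + j) / w (k + n + j)) \<ge> 1))"
proof -
  obtain M where wM: "\<And>n. w n \<le> M"
    using wbdd by blast
  show ?thesis
    using left_invertible_wshift_power_iff[of w M k] wshift_dual_norm_le_iff[of w M k] wpos wM kpos
    unfolding wshift_dual_def by blast
qed

end
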